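(* Let $f:\mathbb{R}^n\to\mathbb{R}$ be twice continuously differentiable, $\varphi:\mathbb{R}^n\to\mathbb{R}$ polyhedral convex (a pointwise maximum of finitely many affine functions), $\psi=f+\varphi$, and suppose $\psi$ can be truncated with sets $\mathbb{R}^n=S_0\supset\cdots\supset S_m$. Let $x^*$ be a stationary point of $\psi$ with $x^*\in S_{i^*}\setminus S_{i^*+1}$ ($S_{m+1}=\emptyset$). Assume (C.1) $\varphi$ is partly smooth at $x^*$ relative to an affine subspace $\mathcal{M}$ and $B_r(x^* )\cap S_{i^*}=B_r(x^* )\cap\mathcal{M}$ for all $r\in(0,\Gamma(x^* ))$; and (C.3) $-\nabla f(x^* )\in\mathrm{ri}\,\partial\varphi(x^* )$. Let $\Lambda=\lambda I$ with $\lambda>0$. Then there exists $r_0\in(0,\Gamma(x^* ))$ such that for every $x\in B_{r_0}(x^* )\cap\mathcal{M}$, with $z=\tau(x)$ and $V=\mathcal{D}\mathrm{prox}^{\Lambda}_{\varphi}(z)$ the derivative of $\mathrm{prox}^{\Lambda}_{\varphi}$ at $z$, $$V\,\mathcal{D}F^{\Lambda}_{\mathrm{nor}}(z)=\nabla^2_{\mathcal{M}}\psi(x).$$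
   Context: $\|\cdot\|$ Euclidean norm, $B_r(x)$ open ball, $\mathrm{ri}$ relative interior, $\mathcal{D}$ the (Fréchet) derivative. $\partial\psi(x)=\nabla f(x)+\partial\varphi(x)$, stationary means $0\in\partial\psi(x)$. $\mathrm{prox}^{\Lambda}_{\varphi}(z)=\arg\min_y\varphi(y)+\frac12(y-z)^T\Lambda(y-z)$; normal map $F^{\Lambda}_{\mathrm{nor}}(z)=\nabla f(\mathrm{prox}^{\Lambda}_{\varphi}(z))+\Lambda(z-\mathrm{prox}^{\Lambda}_{\varphi}(z))$; $\tau(x)=x+\Lambda^{-1}\mathbf{P}_{\partial\varphi(x)}(-\nabla f(x))$ with $\mathbf{P}_C$ the orthogonal projection onto $C$. For $\|d\|=1$, $\Gamma_{\max}(x,d)=\sup\{T>0: t\mapsto\psi(x+td)\text{ is }C^1\text{ on }(0,T)\}$ and $\Gamma(x)=\inf_{\|d\|=1}\Gamma_{\max}(x,d)$. $\psi$ can be truncated means there are sets $\mathbb{R}^n=S_0\supset\cdots\supset S_m$, $\delta\in(0,\infty]$, $\kappa>0$ and $T:\mathbb{R}^n\times(0,\delta]\to\mathbb{R}^n$ with (i) $\Gamma\ge\delta$ on $S_m$; (ii) for $a\in(0,\delta]$, $x\in S_i\setminus S_{i+1}$, $i<m$: if $\Gamma(x)\ge a$ then $T(x,a)=x$, else $T(x,a)\in S_{i+1}$, $\Gamma(T(x,a))\ge a$, $\|T(x,a)-x\|\le\kappa a$. Partial smoothness: a proper convex lsc $\varphi$ is partly smooth at $x$ relative to $\mathcal{M}\ni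 x$ if $\partial\varphi(x)\ne\emptyset$ and (i) $\mathcal{M}$ is a $C^2$-manifold around $x$ and $\varphi|_{\mathcal{M}}$ is $C^2$ around $x$; (ii) the tangent space $T_{\mathcal{M}}(x)$ equals $\mathrm{par}(\partial\varphi(x))^\perp$, $\mathrm{par}(A)=\mathrm{span}(A-A)$; (iii) $\partial\varphi$ is continuous at $x$ relative to $\mathcal{M}$. For affine $\mathcal{M}$ with direction space $T_{\mathcal{M}}$ and orthogonal projector $\mathbf{P}$ onto $T_{\mathcal{M}}$, the Riemannian Hessian $\nabla^2_{\mathcal{M}}\psi(x)$ at $x\in\mathcal{M}$ (where $\psi|_{\mathcal{M}}$ is $C^2$) is the symmetric $n\times n$ matrix with $\nabla^2_{\mathcal{M}}\psi(x)=\mathbf{P}\nabla^2_{\mathcal{M}}\psi(x)\mathbf{P}$ and $\xi^T\nabla^2_{\mathcal{M}}\psi(x)\eta=\frac{\partial^2}{\partial s\partial t}\psi(x+s\xi+t\eta)|_{s=t=0}$ for all $\xi,\eta\in T_{\mathcal{M}}$. *)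

theory Defs
  imports "HOL-Analysis.Analysis"
begin

(* Functions on R^n are modelled on an arbitrary Euclidean space 'a. *)

definition C2_on :: "'a::euclidean_space set \<Rightarrow> ('a \<Rightarrow> real) \<Rightarrow> bool" where
  "C2_on U g \<longleftrightarrow> open U \<and> (\<exists>g' :: 'a \<Rightarrow> ('a \<Rightarrow>\<^sub>L real). \<exists>g'' :: 'a \<Rightarrow> ('a \<Rightarrow>\<^sub>L ('a \<Rightarrow>\<^sub>L real)).
     (\<forall>y\<in>U. (g has_derivative blinfun_apply (g' y)) (at y)) \<and>
     (\<forall>y\<in>U. (g' has_derivative blinfun_apply (g'' y)) (at y)) \<and>
     continuous_on U g'')"

definition grad :: "('a::euclidean_space \<Rightarrow> real) \<Rightarrow> 'a \<Rightarrow> 'a" where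
  "grad f x = (THE v. (f has_derivative (\<lambda>h. v \<bullet> h)) (at x))"

definition polyhedral_convex :: "('a::euclidean_space \<Rightarrow> real) \<Rightarrow> bool" where
  "polyhedral_convex \<phi> \<longleftrightarrow> (\<exists>A :: ('a \<times> real) set. finite A \<and> A \<noteq> {} \<and>
     (\<forall>x. \<phi> x = Max ((\<lambda>(a, b). a \<bullet> x + b) ` A)))"

definition subdiff :: "('a::euclidean_space \<Rightarrow> real) \<Rightarrow> 'a \<Rightarrow> 'a set" where
  "subdiff \<phi> x = {g. \<forall>y. \<phi> y \<ge> \<phi> x + g \<bullet> (y - x)}"

definition psubdiff :: "('a::euclidean_space \<Rightarrow> real) \<Rightarrow> ('a \<Rightarrow> real) \<Rightarrow> 'a \<Rightarrow> 'a set" where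
  "psubdiff f \<phi> x = (\<lambda>g. grad f x + g) ` subdiff \<phi> x"

definition stationary :: "('a::euclidean_space \<Rightarrow> real) \<Rightarrow> ('a \<Rightarrow> real) \<Rightarrow> 'a \<Rightarrow> bool" where
  "stationary f \<phi> x \<longleftrightarrow> 0 \<in> psubdiff f \<phi> x"

definition prox :: "('a::euclidean_space \<Rightarrow> 'a) \<Rightarrow> ('a \<Rightarrow> real) \<Rightarrow> 'a \<Rightarrow> 'a" where
  "prox \<Lambda> \<phi> z = (THE y. \<forall>w. \<phi> y + (1/2) * ((y - z) \<bullet> \<Lambda> (y - z))
                              \<le> \<phi> w + (1/2) * ((w - z) \<bullet> \<Lambda> (w - z)))"

definition Fnor :: "('a::euclidean_space \<Rightarrow> 'a) \<Rightarrow> ('a \<Rightarrow> real) \<Rightarrow> ('a \<Rightarrow> real) \<Rightarrow> 'a \<Rightarrow> 'a" where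
  "Fnor \<Lambda> f \<phi> z = grad f (prox \<Lambda> \<phi> z) + \<Lambda> (z - prox \<Lambda> \<phi> z)"

definition tau :: "('a::euclidean_space \<Rightarrow> 'a) \<Rightarrow> ('a \<Rightarrow> real) \<Rightarrow> ('a \<Rightarrow> real) \<Rightarrow> 'a \<Rightarrow> 'a" where
  "tau \<Lambda> f \<phi> x = x + inv \<Lambda> (closest_point (subdiff \<phi> x) (- grad f x))"

definition Gamma_max :: "('a::euclidean_space \<Rightarrow> real) \<Rightarrow> 'a \<Rightarrow> 'a \<Rightarrow> ereal" where
  "Gamma_max \<psi> x d = Sup {ereal T | T. T > 0 \<and> (\<lambda>t. \<psi> (x + t *\<^sub>R d)) C1_differentiable_on {0<..<T}}"

definition Gamma :: "('a::euclidean_space \<Rightarrow> real) \<Rightarrow> 'a \<Rightarrow> ereal" where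
  "Gamma \<psi> x = Inf {Gamma_max \<psi> x d | d. norm d = 1}"

definition truncatable :: "('a::euclidean_space \<Rightarrow> real) \<Rightarrow> (nat \<Rightarrow> 'a set) \<Rightarrow> nat \<Rightarrow> bool" where
  "truncatable \<psi> S m \<longleftrightarrow> S 0 = UNIV \<and> (\<forall>i<m. S (Suc i) \<subseteq> S i) \<and>
     (\<exists>(\<delta>::ereal) (\<kappa>::real) (T :: 'a \<Rightarrow> real \<Rightarrow> 'a). \<delta> > 0 \<and> \<kappa> > 0 \<and>
        (\<forall>x\<in>S m. Gamma \<psi> x \<ge> \<delta>) \<and>
        (\<forall>a. 0 < a \<and> ereal a \<le> \<delta> \<longrightarrow> (\<forall>i<m. \<forall>x\<in>S i - S (Suc i).
            (Gamma \<psi> x \<ge> ereal a \<longrightarrow> T x a = x) \<and>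
            (\<not> Gamma \<psi> x \<ge> ereal a \<longrightarrow>
               T x a \<in> S (Suc i) \<and> Gamma \<psi> (T x a) \<ge> ereal a \<and> norm (T x a - x) \<le> \<kappa> * a))))"

definition dirsp :: "'a::euclidean_space set \<Rightarrow> 'a set" where
  "dirsp M = {y - z | y z. y \<in> M \<and> z \<in> M}"

definition projM :: "'a::euclidean_space set \<Rightarrow> 'a \<Rightarrow> 'a" where
  "projM M v = closest_point (dirsp M) v"

definition par :: "'a::euclidean_space set \<Rightarrow> 'a set" where
  "par A = span {a - b | a b. a \<in> A \<and> b \<in> A}"

(* phi restricted to the affine set M is C^2 around x: x + u, u in the direction space *)
definition C2_restr_around :: "('a::euclidean_space \<Rightarrow> real) \<Rightarrow> 'a set \<Rightarrow> 'a \<Rightarrow> bool" where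
  "C2_restr_around \<phi> M x \<longleftrightarrow> (\<exists>U. 0 \<in> U \<and> C2_on U (\<lambda>u. \<phi> (x + projM M u)))"

(* continuity (Painleve-Kuratowski: inner and outer semicontinuity) of subdiff phi at x relative to M *)
definition subdiff_cont_rel :: "('a::euclidean_space \<Rightarrow> real) \<Rightarrow> 'a set \<Rightarrow> 'a \<Rightarrow> bool" where
  "subdiff_cont_rel \<phi> M x \<longleftrightarrow>
     (\<forall>v\<in>subdiff \<phi> x. \<forall>e>0. eventually (\<lambda>y. \<exists>w\<in>subdiff \<phi> y. dist w v < e) (at x within M)) \<and>
     (\<forall>v. (\<forall>e>0. \<forall>d>0. \<exists>y\<in>M \<inter> ball x d. \<exists>w\<in>subdiff \<phi> y. dist w v < e) \<longrightarrow> v \<in> subdiff \<phi> x)"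

definition partly_smooth_affine :: "('a::euclidean_space \<Rightarrow> real) \<Rightarrow> 'a \<Rightarrow> 'a set \<Rightarrow> bool" where
  "partly_smooth_affine \<phi> x M \<longleftrightarrow> affine M \<and> x \<in> M \<and> subdiff \<phi> x \<noteq> {} \<and>
     C2_restr_around \<phi> M x \<and>
     dirsp M = orthogonal_comp (par (subdiff \<phi> x)) \<and>
     subdiff_cont_rel \<phi> M x"

definition is_riem_hessian :: "'a::euclidean_space set \<Rightarrow> ('a \<Rightarrow> real) \<Rightarrow> 'a \<Rightarrow> ('a \<Rightarrow> 'a) \<Rightarrow> bool" where
  "is_riem_hessian M \<psi> x H \<longleftrightarrow> linear H \<and> (\<forall>u v. H u \<bullet> v = u \<bullet> H v) \<and>
     H = projM M \<circ> H \<circ> projM M \<and>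
     (\<forall>\<xi>\<in>dirsp M. \<forall>\<eta>\<in>dirsp M. \<exists>g. eventually (\<lambda>s.
          ((\<lambda>t. \<psi> (x + s *\<^sub>R \<xi> + t *\<^sub>R \<eta>)) has_real_derivative g s) (at 0)) (nhds 0) \<and>
        (g has_real_derivative (\<xi> \<bullet> H \<eta>)) (at 0))"

end

theory Submission
  imports Defs
begin

text \<open>
  Near \<open>x\<^sup>*\<close> the polyhedral function \<open>\<phi>\<close> is the maximum of its active affine pieces, whose
  slopes lie in \<open>C = \<partial>\<phi>(x\<^sup>*)\<close>. All active pieces agree along \<open>par(C)\<^sup>\<bottom>\<close>, the direction space
  of \<open>\<M>\<close>, so \<open>\<phi>\<close> is affine on \<open>\<M>\<close> near \<open>x\<^sup>*\<close> and its subdifferential is constantly \<open>C\<close>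
  there; along every ray from \<open>x\<^sup>*\<close> it is affine for a short time, whence \<open>\<Gamma>(x\<^sup>*) > 0\<close>.

  For \<open>x \<in> \<M>\<close> near \<open>x\<^sup>*\<close>, (C.3) and continuity of \<open>\<nabla>f\<close> keep \<open>p = P\<^sub>C(-\<nabla>f(x))\<close> in
  \<open>ri C\<close>, and \<open>z = \<tau>(x) = x + p/\<lambda>\<close>. Writing \<open>P\<close> for the orthogonal projector onto the direction
  space \<open>T\<close> of \<open>\<M>\<close>, for \<open>z'\<close> near \<open>z\<close> the point \<open>y = x + P(z' - z)\<close> satisfies
  \<open>\<lambda>(z' - y) = p + \<lambda>(I - P)(z' - z) \<in> C = \<partial>\<phi>(y)\<close>, so the prox is affine near \<open>z\<close> with
  derivative \<open>V = P\<close>. Then \<open>\<D>F\<^sub>n\<^sub>o\<^sub>r(z) = \<nabla>\<^sup>2f(x) P + \<lambda>(I - P)\<close> and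
  \<open>V \<D>F\<^sub>n\<^sub>o\<^sub>r(z) = P \<nabla>\<^sup>2f(x) P\<close>, the Riemannian Hessian of \<open>\<psi>\<close>, because \<open>\<phi>\<close> is affine on
  \<open>\<M>\<close> near \<open>x\<close>.
\<close>

section \<open>Second derivatives\<close>

lemma mvt_segment:
  fixes F :: "'a::real_normed_vector \<Rightarrow> real"
  assumes "\<And>y. (F has_derivative F' y) (at y)"
  obtains t where "t \<in> {0..1}" "F (a + v) - F a = F' (a + t *\<^sub>R v) v"
proof -
  have "((\<lambda>t. F (a + t *\<^sub>R v)) has_derivative (\<lambda>s. F' (a + t *\<^sub>R v) (s *\<^sub>R v))) (at t within {0..1})"
    for t
  proof -
    have "((\<lambda>t. a + t *\<^sub>R v) has_derivative (\<lambda>s. s *\<^sub>R v)) (at t within {0..1})"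
      by (auto intro!: derivative_eq_intros)
    from has_derivative_in_compose[OF this assms[THEN has_derivative_at_withinI]]
    show ?thesis by (simp add: o_def)
  qed
  from mvt_very_simple[of 0 1, OF _ this] that show ?thesis by auto
qed

lemma second_difference_mvt:
  fixes g :: "'a::real_normed_vector \<Rightarrow> real" and g' :: "'a \<Rightarrow> 'a \<Rightarrow>\<^sub>L real"
    and g'' :: "'a \<Rightarrow> 'a \<Rightarrow>\<^sub>L 'a \<Rightarrow>\<^sub>L real"
  assumes g': "\<And>y. (g has_derivative g' y) (at y)"
    and g'': "\<And>y. (g' has_derivative g'' y) (at y)"
  obtains \<xi> where "dist \<xi> x \<le> \<bar>e\<bar> * (norm h + norm k)"
    "g (x + e *\<^sub>R h + e *\<^sub>R k) - g (x + e *\<^sub>R h) - g (x + e *\<^sub>R k) + g x = e\<^sup>2 * g'' \<xi> h k"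
proof -
  define D where "D y = g (y + e *\<^sub>R h) - g y" for y
  have shift: "((\<lambda>y. y + e *\<^sub>R h) has_derivative (\<lambda>d. d)) (at y)" for y
    by (auto intro!: derivative_eq_intros)
  have "(D has_derivative (\<lambda>d. g' (y + e *\<^sub>R h) d - g' y d)) (at y)" for y
    unfolding D_def using has_derivative_diff[OF has_derivative_compose[OF shift g'] g'] .
  then obtain \<theta> where \<theta>: "\<theta> \<in> {0..1}" and D: "D (x + e *\<^sub>R k) - D x =
      g' (x + \<theta> *\<^sub>R (e *\<^sub>R k) + e *\<^sub>R h) (e *\<^sub>R k) - g' (x + \<theta> *\<^sub>R (e *\<^sub>R k)) (e *\<^sub>R k)"
    by (rule mvt_segment[where a = x and v = "e *\<^sub>R k"]) auto
  define a where "a = x + \<theta> *\<^sub>R (e *\<^sub>R k)"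
  have "((\<lambda>y. g' y (e *\<^sub>R k)) has_derivative (\<lambda>d. g'' y d (e *\<^sub>R k))) (at y)" for y
    using blinfun.bounded_linear_left g'' by (rule bounded_linear.has_derivative)
  then obtain \<sigma> where \<sigma>: "\<sigma> \<in> {0..1}" and E: "g' (a + e *\<^sub>R h) (e *\<^sub>R k) - g' a (e *\<^sub>R k) =
      g'' (a + \<sigma> *\<^sub>R (e *\<^sub>R h)) (e *\<^sub>R h) (e *\<^sub>R k)"
    by (rule mvt_segment[where a = a and v = "e *\<^sub>R h"])
  show ?thesis
  proof
    show "g (x + e *\<^sub>R h + e *\<^sub>R k) - g (x + e *\<^sub>R h) - g (x + e *\<^sub>R k) + g x
        = e\<^sup>2 * g'' (a + \<sigma> *\<^sub>R (e *\<^sub>R h)) h k"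
      using D E unfolding D_def a_def
      by (simp add: algebra_simps blinfun.scaleR_left blinfun.scaleR_right power2_eq_square)
    have "dist (a + \<sigma> *\<^sub>R (e *\<^sub>R h)) x \<le> norm (\<theta> *\<^sub>R (e *\<^sub>R k)) + norm (\<sigma> *\<^sub>R (e *\<^sub>R h))"
      using norm_triangle_ineq[of "\<theta> *\<^sub>R (e *\<^sub>R k)" "\<sigma> *\<^sub>R (e *\<^sub>R h)"]
      unfolding a_def dist_norm by (simp add: algebra_simps)
    also have "\<dots> \<le> \<bar>e\<bar> * (norm h + norm k)"
      using \<theta> \<sigma> mult_left_le_one_le[of "\<bar>e\<bar> * norm k" \<theta>] mult_left_le_one_le[of "\<bar>e\<bar> * norm h" \<sigma>]
      by (simp add: abs_mult distrib_left mult.assoc)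
    finally show "dist (a + \<sigma> *\<^sub>R (e *\<^sub>R h)) x \<le> \<bar>e\<bar> * (norm h + norm k)" .
  qed
qed

lemma second_derivative_symmetric:
  fixes g :: "'a::real_normed_vector \<Rightarrow> real" and g' :: "'a \<Rightarrow> 'a \<Rightarrow>\<^sub>L real"
    and g'' :: "'a \<Rightarrow> 'a \<Rightarrow>\<^sub>L 'a \<Rightarrow>\<^sub>L real"
  assumes g': "\<And>y. (g has_derivative g' y) (at y)"
    and g'': "\<And>y. (g' has_derivative g'' y) (at y)"
    and cont: "isCont g'' x"
  shows "g'' x h k = g'' x k h"
proof -
  define \<Delta> where "\<Delta> h k e = (g (x + e *\<^sub>R h + e *\<^sub>R k) - g (x + e *\<^sub>R h) - g (x + e *\<^sub>R k) + g x) / e\<^sup>2"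
    for h k and e :: real
  have lim: "(\<Delta> h k \<longlongrightarrow> g'' x h k) (at 0)" for h k
  proof -
    have "\<exists>\<xi>. dist \<xi> x \<le> \<bar>e\<bar> * (norm h + norm k) \<and>
        g (x + e *\<^sub>R h + e *\<^sub>R k) - g (x + e *\<^sub>R h) - g (x + e *\<^sub>R k) + g x = e\<^sup>2 * g'' \<xi> h k" for e
      by (rule second_difference_mvt[OF g' g'']) blast
    then obtain \<xi> where \<xi>: "\<And>e. dist (\<xi> e) x \<le> \<bar>e\<bar> * (norm h + norm k)"
      and eq: "\<And>e. g (x + e *\<^sub>R h + e *\<^sub>R k) - g (x + e *\<^sub>R h) - g (x + e *\<^sub>R k) + g x
        = e\<^sup>2 * g'' (\<xi> e) h k"
      by metis
    have \<Delta>\<xi>: "\<Delta> h k e = g'' (\<xi> e) h k" if "e \<noteq> 0" for e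
      using that unfolding \<Delta>_def eq by simp
    have "((\<lambda>e. \<bar>e\<bar> * (norm h + norm k)) \<longlongrightarrow> 0) (at 0)"
      by (auto intro!: tendsto_eq_intros)
    then have "((\<lambda>e. \<xi> e - x) \<longlongrightarrow> 0) (at 0)"
      by (rule Lim_null_comparison[rotated]) (use \<xi> in \<open>simp add: dist_norm\<close>)
    then have "(\<xi> \<longlongrightarrow> x) (at 0)"
      by (rule LIM_zero_cancel)
    then have "((\<lambda>e. g'' (\<xi> e) h k) \<longlongrightarrow> g'' x h k) (at 0)"
      by (intro blinfun.tendsto tendsto_const isCont_tendsto_compose[OF cont])
    moreover have "\<forall>\<^sub>F e in at 0. g'' (\<xi> e) h k = \<Delta> h k e"
      by (simp add: eventually_at_filter \<Delta>\<xi>)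
    ultimately show ?thesis by (rule Lim_transform_eventually)
  qed
  have "\<Delta> h k = \<Delta> k h"
    by (simp add: \<Delta>_def fun_eq_iff add.commute add.left_commute)
  with lim[of h k] lim[of k h] show ?thesis
    using tendsto_unique[OF trivial_limit_at] by metis
qed

lemma linear_inner_representation:
  fixes L :: "'a::euclidean_space \<Rightarrow> real"
  assumes "linear L"
  shows "L h = (\<Sum>b\<in>Basis. L b *\<^sub>R b) \<bullet> h"
proof -
  have "L h = L (\<Sum>b\<in>Basis. (h \<bullet> b) *\<^sub>R b)"
    by (simp add: euclidean_representation)
  also have "\<dots> = (\<Sum>b\<in>Basis. L b *\<^sub>R b) \<bullet> h"
    by (simp add: linear_sum[OF assms] linear_scale[OF assms] inner_sum_right inner_commute mult.commute)
  finally show ?thesis .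
qed

lemma grad_eqI:
  assumes "(f has_derivative (\<lambda>h. v \<bullet> h)) (at y)"
  shows "grad f y = v"
  unfolding grad_def
proof (rule the_equality)
  fix w assume "(f has_derivative (\<bullet>) w) (at y)"
  from has_derivative_unique[OF this assms] have "w \<bullet> (w - v) = v \<bullet> (w - v)"
    by metis
  then have "(w - v) \<bullet> (w - v) = 0"
    by (simp add: inner_diff_left)
  then show "w = v"
    by simp
qed (rule assms)

lemma C2_on_UNIV_gradient_hessian:
  fixes f :: "'a::euclidean_space \<Rightarrow> real"
  assumes "C2_on UNIV f"
  obtains H where "\<And>y. (f has_derivative (\<lambda>h. grad f y \<bullet> h)) (at y)"
    and "\<And>y. (grad f has_derivative H y) (at y)"
    and "\<And>y h k. H y h \<bullet> k = H y k \<bullet> h"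
    and "continuous_on UNIV (grad f)"
proof -
  obtain g' g'' where g': "\<And>y. (f has_derivative blinfun_apply (g' y)) (at y)"
    and g'': "\<And>y. (g' has_derivative blinfun_apply (g'' y)) (at y)"
    and cont: "continuous_on UNIV g''"
    using assms unfolding C2_on_def by blast
  define G where "G y = (\<Sum>b\<in>Basis. g' y b *\<^sub>R b)" for y
  define H where "H y h = (\<Sum>b\<in>Basis. g'' y h b *\<^sub>R b)" for y h
  have g'_inner: "blinfun_apply (g' y) = (\<lambda>h. G y \<bullet> h)" for y
    unfolding G_def fun_eq_iff
    by (intro allI linear_inner_representation bounded_linear.linear[OF blinfun.bounded_linear_right])
  have grad_f: "grad f = G"
    using g' unfolding g'_inner fun_eq_iff by (blast intro: grad_eqI)
  have df: "(f has_derivative (\<lambda>h. grad f y \<bullet> h)) (at y)" for y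
    using g'[of y] unfolding g'_inner grad_f .
  have dgrad: "(grad f has_derivative H y) (at y)" for y
  proof -
    have "((\<lambda>y. g' y b) has_derivative (\<lambda>h. g'' y h b)) (at y)" for b
      using blinfun.bounded_linear_left g'' by (rule bounded_linear.has_derivative)
    then show ?thesis
      unfolding grad_f G_def H_def by (auto intro!: has_derivative_sum has_derivative_scaleR_left)
  qed
  have "H y h \<bullet> k = g'' y h k" for y h k
    unfolding H_def
    by (rule linear_inner_representation[symmetric])
      (rule bounded_linear.linear[OF blinfun.bounded_linear_right])
  moreover have "g'' y h k = g'' y k h" for y h k
    using g' g'' cont by (rule second_derivative_symmetric[OF _ _ continuous_on_interior]) auto
  moreover have "continuous_on UNIV (grad f)"
    using dgrad by (meson differentiable_def differentiable_imp_continuous_on differentiable_on_def)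
  ultimately show ?thesis
    using that df dgrad by metis
qed

lemma has_real_derivative_along_line:
  fixes F :: "'a::real_normed_vector \<Rightarrow> real"
  assumes "(F has_derivative F') (at (y + t *\<^sub>R v))"
  shows "((\<lambda>t. F (y + t *\<^sub>R v)) has_real_derivative F' v) (at t)"
proof -
  have "((\<lambda>t. y + t *\<^sub>R v) has_derivative (\<lambda>s. s *\<^sub>R v)) (at t)"
    by (auto intro!: derivative_eq_intros)
  from has_derivative_compose[OF this assms]
  have "((\<lambda>t. F (y + t *\<^sub>R v)) has_derivative (\<lambda>s. F' (s *\<^sub>R v))) (at t)" .
  moreover have "(\<lambda>s. F' (s *\<^sub>R v)) = (*) (F' v)"
    using linear_scale[OF has_derivative_linear[OF assms]] by (simp add: fun_eq_iff)
  ultimately show ?thesis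
    unfolding has_field_derivative_def by simp
qed

lemma eventually_dist_along_line_less:
  fixes y :: "'a::real_normed_vector"
  assumes "dist y x < r"
  shows "\<forall>\<^sub>F t in nhds 0. dist (y + t *\<^sub>R v) x < r"
proof -
  have "((\<lambda>t. dist (y + t *\<^sub>R v) x) \<longlongrightarrow> dist (y + 0 *\<^sub>R v) x) (nhds 0)"
    by (intro tendsto_intros) (simp_all add: filterlim_ident)
  with assms show ?thesis
    by (simp add: order_tendstoD(2))
qed

section \<open>Orthogonal projection onto a subspace\<close>

lemma closest_point_subspace:
  fixes T :: "'a::euclidean_space set"
  assumes T: "subspace T"
  shows closest_point_subspace_in: "closest_point T u \<in> T"
    and closest_point_subspace_orthogonal: "w \<in> T \<Longrightarrow> (u - closest_point T u) \<bullet> w = 0"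
proof -
  have cc: "convex T" "closed T" "T \<noteq> {}"
    using T subspace_0 by (auto intro: subspace_imp_convex closed_subspace)
  show p: "closest_point T u \<in> T"
    by (rule closest_point_in_set[OF cc(2,3)])
  assume w: "w \<in> T"
  have "(u - closest_point T u) \<bullet> ((closest_point T u + c *\<^sub>R w) - closest_point T u) \<le> 0" for c
    using T p w by (intro closest_point_dot cc subspace_add subspace_scale)
  from this[of 1] this[of "-1"] show "(u - closest_point T u) \<bullet> w = 0"
    by simp
qed

lemma closest_point_subspace_eqI:
  fixes T :: "'a::euclidean_space set"
  assumes T: "subspace T" and "p \<in> T" and orth: "\<And>w. w \<in> T \<Longrightarrow> (u - p) \<bullet> w = 0"
  shows "closest_point T u = p"
proof -
  define d where "d = p - closest_point T u"
  have "d \<in> T"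
    unfolding d_def using T assms(2) closest_point_subspace_in by (blast intro: subspace_diff)
  then have "d \<bullet> d = (u - closest_point T u) \<bullet> d - (u - p) \<bullet> d"
    unfolding d_def by (simp add: inner_diff_left)
  also have "\<dots> = 0"
    using \<open>d \<in> T\<close> by (simp add: closest_point_subspace_orthogonal[OF T] orth)
  finally show ?thesis
    unfolding d_def by simp
qed

lemma linear_closest_point_subspace:
  fixes T :: "'a::euclidean_space set"
  assumes T: "subspace T"
  shows "linear (closest_point T)"
proof
  fix u v and c :: real
  show "closest_point T (u + v) = closest_point T u + closest_point T v"
    using T closest_point_subspace_orthogonal[OF T, of _ u] closest_point_subspace_orthogonal[OF T, of _ v]
    by (intro closest_point_subspace_eqI subspace_add closest_point_subspace_in)
      (auto simp: algebra_simps inner_diff_left inner_add_left)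
  show "closest_point T (c *\<^sub>R u) = c *\<^sub>R closest_point T u"
    using T closest_point_subspace_orthogonal[OF T, of _ u]
    by (intro closest_point_subspace_eqI subspace_scale closest_point_subspace_in)
      (auto simp: scaleR_diff_right[symmetric])
qed

lemma closest_point_subspace_self_adjoint:
  fixes T :: "'a::euclidean_space set"
  assumes T: "subspace T"
  shows "closest_point T u \<bullet> v = u \<bullet> closest_point T v"
proof -
  have "closest_point T u \<bullet> v = closest_point T u \<bullet> closest_point T v"
    using closest_point_subspace_orthogonal[OF T closest_point_subspace_in[OF T], of v u]
    by (simp add: inner_diff_right inner_commute)
  also have "\<dots> = u \<bullet> closest_point T v"
    using closest_point_subspace_orthogonal[OF T closest_point_subspace_in[OF T], of u v]
    by (simp add: inner_diff_left)
  finally show ?thesis .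
qed

lemma closest_point_subspace_idem:
  "subspace T \<Longrightarrow> closest_point T (closest_point T u) = closest_point T (u::'a::euclidean_space)"
  by (simp add: closest_point_self closest_point_subspace_in)

lemma closest_point_subspace_residual:
  "subspace T \<Longrightarrow> u - closest_point T u \<in> orthogonal_comp (T::'a::euclidean_space set)"
  unfolding orthogonal_comp_def orthogonal_def
  using closest_point_subspace_orthogonal[of T _ u] by (simp add: inner_commute)

lemma norm_closest_point_subspace_le:
  fixes T :: "'a::euclidean_space set"
  assumes T: "subspace T"
  shows "norm (closest_point T u) \<le> norm u"
    and "norm (u - closest_point T u) \<le> norm u"
proof -
  have "closed T" "convex T" "0 \<in> T"
    using T by (auto intro: closed_subspace subspace_imp_convex subspace_0)
  then show "norm (closest_point T u) \<le> norm u"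
    using closest_point_lipschitz[of T u 0] by (auto simp: closest_point_self dist_norm)
  show "norm (u - closest_point T u) \<le> norm u"
    using closest_point_le[OF \<open>closed T\<close> \<open>0 \<in> T\<close>, of u] by (simp add: dist_norm)
qed

lemma closest_point_in_rel_interior_near:
  fixes C :: "'a::euclidean_space set"
  assumes "closed C" and "q \<in> rel_interior C"
  obtains e where "e > 0" "\<And>u. dist u q < e \<Longrightarrow> closest_point C u \<in> rel_interior C"
proof -
  obtain e where "e > 0" and e: "ball q e \<inter> affine hull C \<subseteq> C" and "q \<in> C"
    using assms(2) unfolding mem_rel_interior_ball by blast
  have "closest_point C u \<in> rel_interior C" if u: "dist u q < e / 2" for u
  proof -
    define p where "p = closest_point C u"
    have "p \<in> C"
      unfolding p_def using assms(1) \<open>q \<in> C\<close> by (auto intro: closest_point_in_set)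
    have "dist p q \<le> dist u p + dist u q"
      by (simp add: dist_triangle3)
    also have "\<dots> \<le> 2 * dist u q"
      using closest_point_le[OF assms(1) \<open>q \<in> C\<close>, of u] unfolding p_def by simp
    finally have "dist p q < e"
      using u by simp
    have "ball p (e - dist p q) \<subseteq> ball q e"
      by (simp add: ball_subset_ball_iff dist_commute)
    then have "ball p (e - dist p q) \<inter> affine hull C \<subseteq> C"
      using e by blast
    with \<open>p \<in> C\<close> \<open>dist p q < e\<close> show ?thesis
      unfolding p_def[symmetric] mem_rel_interior_ball by (intro conjI exI[of _ "e - dist p q"]) auto
  qed
  with \<open>e > 0\<close> that show ?thesis
    by (metis half_gt_zero)
qed

lemma par_add_mem_affine_hull:
  assumes "p \<in> C" and "v \<in> par C"
  shows "p + v \<in> affine hull C"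
proof -
  let ?D = "(\<lambda>y. - p + y) ` (affine hull C)"
  have D: "subspace ?D"
    using assms(1) by (intro affine_diffs_subspace) (auto intro: hull_inc)
  have "a - b \<in> ?D" if "a \<in> C" "b \<in> C" for a b
  proof -
    have "p + 1 *\<^sub>R (a - b) \<in> affine hull C"
      using assms(1) that by (intro mem_affine_3_minus affine_affine_hull hull_inc)
    then show ?thesis
      by (auto intro!: image_eqI[where x = "p + (a - b)"])
  qed
  then have "par C \<subseteq> ?D"
    unfolding par_def using D by (intro span_minimal) auto
  with assms(2) show ?thesis
    by auto
qed

lemma dirsp_affine:
  assumes "affine M" and "x \<in> M"
  shows "dirsp M = (\<lambda>y. y - x) ` M"
proof (intro equalityI subsetI)
  fix w assume "w \<in> dirsp M"
  then obtain y y' where "y \<in> M" "y' \<in> M" "w = y - y'"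
    unfolding dirsp_def by blast
  moreover have "x + 1 *\<^sub>R (y - y') \<in> M"
    using assms \<open>y \<in> M\<close> \<open>y' \<in> M\<close> by (intro mem_affine_3_minus)
  ultimately show "w \<in> (\<lambda>y. y - x) ` M"
    by (auto intro!: image_eqI[where x = "x + (y - y')"])
qed (use assms in \<open>auto simp: dirsp_def\<close>)

section \<open>Polyhedral convex functions near a point\<close>

lemma closed_subdiff: "closed (subdiff \<phi> x)"
proof -
  have "subdiff \<phi> x = (\<Inter>y. {g. (y - x) \<bullet> g \<le> \<phi> y - \<phi> x})"
    unfolding subdiff_def by (auto simp: inner_commute algebra_simps)
  then show ?thesis
    by (auto intro!: closed_INT closed_halfspace_le)
qed

lemma subdiff_eq_if_affine_on_ray:
  fixes \<phi> :: "'a::euclidean_space \<Rightarrow> real"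
  assumes "subdiff \<phi> x \<noteq> {}"
    and aff1: "\<And>g. g \<in> subdiff \<phi> x \<Longrightarrow> \<phi> (x + w) = \<phi> x + g \<bullet> w"
    and aff2: "\<And>g. g \<in> subdiff \<phi> x \<Longrightarrow> \<phi> (x + 2 *\<^sub>R w) = \<phi> x + 2 * (g \<bullet> w)"
  shows "subdiff \<phi> (x + w) = subdiff \<phi> x"
proof (intro equalityI subsetI)
  fix g assume g: "g \<in> subdiff \<phi> x"
  show "g \<in> subdiff \<phi> (x + w)"
    using g aff1[OF g] unfolding subdiff_def by (auto simp: inner_diff_right inner_add_right)
next
  fix g assume g: "g \<in> subdiff \<phi> (x + w)"
  \<comment> \<open>the subgradient inequalities at \<open>x\<close> and at \<open>x + 2w\<close> bound \<open>g \<bullet> w\<close> from both sides\<close>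
  obtain g0 where g0: "g0 \<in> subdiff \<phi> x"
    using assms(1) by blast
  have "\<phi> x \<ge> \<phi> (x + w) + g \<bullet> (x - (x + w))"
    and "\<phi> (x + 2 *\<^sub>R w) \<ge> \<phi> (x + w) + g \<bullet> ((x + 2 *\<^sub>R w) - (x + w))"
    using g unfolding subdiff_def by blast+
  then have "g \<bullet> w = g0 \<bullet> w"
    using aff1[OF g0] aff2[OF g0] by (simp add: scaleR_2 inner_diff_right)
  then show "g \<in> subdiff \<phi> x"
    using g aff1[OF g0] unfolding subdiff_def by (auto simp: inner_diff_right algebra_simps)
qed

lemma eventually_Max_eq_Max_active:
  fixes F :: "'i \<Rightarrow> 'a::t2_space \<Rightarrow> real"
  assumes I: "finite I" "I \<noteq> {}" and cont: "\<And>i. i \<in> I \<Longrightarrow> isCont (F i) x"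
  defines "K \<equiv> {i \<in> I. F i x = Max ((\<lambda>i. F i x) ` I)}"
  shows "\<forall>\<^sub>F y in nhds x. Max ((\<lambda>i. F i y) ` I) = Max ((\<lambda>i. F i y) ` K)"
proof -
  have "Max ((\<lambda>i. F i x) ` I) \<in> (\<lambda>i. F i x) ` I"
    using I by (intro Max_in) auto
  then obtain k where k: "k \<in> K"
    unfolding K_def by force
  have K: "finite K" "K \<noteq> {}" "K \<subseteq> I"
    using I k unfolding K_def by auto
  have "\<forall>\<^sub>F y in nhds x. \<forall>i\<in>I - K. F i y < F k y"
  proof (intro eventually_ball_finite ballI)
    fix i assume i: "i \<in> I - K"
    then have "0 < F k x - F i x"
      using k I unfolding K_def by (auto intro!: Max_ge simp: order_less_le)
    moreover have "((\<lambda>y. F k y - F i y) \<longlongrightarrow> F k x - F i x) (at x)"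
      using cont i k K(3) by (intro tendsto_diff isContD) auto
    ultimately have "\<forall>\<^sub>F y in at x. 0 < F k y - F i y"
      by (rule order_tendstoD(1)[rotated])
    with \<open>0 < F k x - F i x\<close> show "\<forall>\<^sub>F y in nhds x. F i y < F k y"
      unfolding eventually_nhds_conv_at by (simp add: eventually_mono)
  qed (use I in simp)
  then show ?thesis
  proof (rule eventually_mono)
    fix y assume below: "\<forall>i\<in>I - K. F i y < F k y"
    have "Max ((\<lambda>i. F i y) ` I) \<in> (\<lambda>i. F i y) ` I"
      using I by (intro Max_in) auto
    then obtain i where "i \<in> I" and "Max ((\<lambda>i. F i y) ` I) = F i y"
      by auto
    moreover have "F i y \<le> Max ((\<lambda>i. F i y) ` K)"
    proof -
      have "F k y \<le> Max ((\<lambda>i. F i y) ` K)"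
        using K k by (intro Max_ge) auto
      moreover have "F i y \<le> Max ((\<lambda>i. F i y) ` K)" if "i \<in> K"
        using K that by (intro Max_ge) auto
      ultimately show ?thesis
        using below[rule_format, of i] \<open>i \<in> I\<close> by (cases "i \<in> K") auto
    qed
    moreover have "Max ((\<lambda>i. F i y) ` K) \<le> Max ((\<lambda>i. F i y) ` I)"
      using I K by (intro Max_mono) auto
    ultimately show "Max ((\<lambda>i. F i y) ` I) = Max ((\<lambda>i. F i y) ` K)"
      by linarith
  qed
qed

lemma polyhedral_convex_local_max:
  fixes \<phi> :: "'a::euclidean_space \<Rightarrow> real"
  assumes "polyhedral_convex \<phi>"
  obtains J \<rho> where "finite J" "J \<noteq> {}" "J \<subseteq> subdiff \<phi> x" "\<rho> > 0"
    "\<And>y. dist y x < \<rho> \<Longrightarrow> \<phi> y = \<phi> x + Max ((\<lambda>a. a \<bullet> (y - x)) ` J)"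
proof -
  obtain A where A: "finite A" "A \<noteq> {}" and \<phi>: "\<And>y. \<phi> y = Max ((\<lambda>ab. fst ab \<bullet> y + snd ab) ` A)"
    using assms unfolding polyhedral_convex_def case_prod_beta by blast
  define K where "K = {ab \<in> A. fst ab \<bullet> x + snd ab = \<phi> x}"
  define J where "J = fst ` K"
  have piece_le: "fst ab \<bullet> y + snd ab \<le> \<phi> y" if "ab \<in> A" for ab y
    unfolding \<phi> using A that by (intro Max_ge) auto
  have active: "fst ab \<bullet> y + snd ab = fst ab \<bullet> (y - x) + \<phi> x" if "ab \<in> K" for ab y
    using that unfolding K_def by (simp add: inner_diff_right)
  have "\<phi> x \<in> (\<lambda>ab. fst ab \<bullet> x + snd ab) ` A"
    unfolding \<phi> using A by (intro Max_in) auto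
  then have "finite K" "K \<noteq> {}"
    using A(1) unfolding K_def by force+
  then have J: "finite J" "J \<noteq> {}"
    unfolding J_def by auto
  moreover have "J \<subseteq> subdiff \<phi> x"
  proof
    fix a assume "a \<in> J"
    then obtain ab where ab: "ab \<in> K" "a = fst ab"
      unfolding J_def by blast
    have "\<phi> x + a \<bullet> (y - x) \<le> \<phi> y" for y
      using active[OF ab(1), of y] piece_le[of ab y] ab unfolding K_def by simp
    then show "a \<in> subdiff \<phi> x"
      unfolding subdiff_def by simp
  qed
  moreover have "\<forall>\<^sub>F y in nhds x. \<phi> y = Max ((\<lambda>ab. fst ab \<bullet> y + snd ab) ` K)"
    using eventually_Max_eq_Max_active[OF A, where F = "\<lambda>ab y. fst ab \<bullet> y + snd ab" and x = x]
    unfolding \<phi>[symmetric] K_def[symmetric] by simp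
  then have "\<forall>\<^sub>F y in nhds x. \<phi> y = \<phi> x + Max ((\<lambda>a. a \<bullet> (y - x)) ` J)"
  proof (rule eventually_mono)
    fix y assume "\<phi> y = Max ((\<lambda>ab. fst ab \<bullet> y + snd ab) ` K)"
    also have "\<dots> = Max ((\<lambda>ab. fst ab \<bullet> (y - x) + \<phi> x) ` K)"
      by (simp add: active cong: image_cong)
    also have "\<dots> = \<phi> x + Max ((\<lambda>a. a \<bullet> (y - x)) ` J)"
      using \<open>finite K\<close> \<open>K \<noteq> {}\<close> unfolding J_def by (simp add: Max_add_commute image_image)
    finally show "\<phi> y = \<phi> x + Max ((\<lambda>a. a \<bullet> (y - x)) ` J)" .
  qed
  then obtain \<rho> where "\<rho> > 0" "\<And>y. dist y x < \<rho> \<Longrightarrow> \<phi> y = \<phi> x + Max ((\<lambda>a. a \<bullet> (y - x)) ` J)"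
    unfolding eventually_nhds_metric by blast
  ultimately show ?thesis
    using that by blast
qed

lemma polyhedral_convex_affine_along_par_orthogonal:
  fixes \<phi> :: "'a::euclidean_space \<Rightarrow> real"
  assumes "polyhedral_convex \<phi>"
  obtains \<rho> where "\<rho> > 0" "subdiff \<phi> x \<noteq> {}"
    "\<And>y g. dist y x < \<rho> \<Longrightarrow> y - x \<in> orthogonal_comp (par (subdiff \<phi> x)) \<Longrightarrow>
      g \<in> subdiff \<phi> x \<Longrightarrow> \<phi> y = \<phi> x + g \<bullet> (y - x)"
proof -
  obtain J \<rho> where J: "finite J" "J \<noteq> {}" "J \<subseteq> subdiff \<phi> x" and "\<rho> > 0"
    and \<phi>: "\<And>y. dist y x < \<rho> \<Longrightarrow> \<phi> y = \<phi> x + Max ((\<lambda>a. a \<bullet> (y - x)) ` J)"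
    using polyhedral_convex_local_max[OF assms] by blast
  have "\<phi> y = \<phi> x + g \<bullet> (y - x)"
    if "dist y x < \<rho>" "y - x \<in> orthogonal_comp (par (subdiff \<phi> x))" "g \<in> subdiff \<phi> x" for y g
  proof -
    have "a \<bullet> (y - x) = g \<bullet> (y - x)" if "a \<in> J" for a
    proof -
      have "a - g \<in> par (subdiff \<phi> x)"
        unfolding par_def using J(3) \<open>a \<in> J\<close> \<open>g \<in> subdiff \<phi> x\<close> by (intro span_base) blast
      then have "(a - g) \<bullet> (y - x) = 0"
        using \<open>y - x \<in> orthogonal_comp _\<close> by (simp add: orthogonal_comp_def orthogonal_def)
      then show ?thesis
        by (simp add: inner_diff_left)
    qed
    then have "(\<lambda>a. a \<bullet> (y - x)) ` J = {g \<bullet> (y - x)}"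
      using J(2) by force
    then show ?thesis
      using \<phi>[OF \<open>dist y x < \<rho>\<close>] by simp
  qed
  with \<open>\<rho> > 0\<close> J that show ?thesis
    by blast
qed

lemma polyhedral_convex_subdiff_locally_constant:
  fixes \<phi> :: "'a::euclidean_space \<Rightarrow> real"
  assumes "polyhedral_convex \<phi>"
  obtains \<rho> where "\<rho> > 0"
    "\<And>y. dist y x < \<rho> \<Longrightarrow> y - x \<in> orthogonal_comp (par (subdiff \<phi> x)) \<Longrightarrow>
      subdiff \<phi> y = subdiff \<phi> x \<and> (\<forall>g\<in>subdiff \<phi> x. \<phi> y = \<phi> x + g \<bullet> (y - x))"
proof -
  let ?N = "orthogonal_comp (par (subdiff \<phi> x))"
  obtain \<rho> where "\<rho> > 0" "subdiff \<phi> x \<noteq> {}"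
    and aff: "\<And>y g. dist y x < \<rho> \<Longrightarrow> y - x \<in> ?N \<Longrightarrow> g \<in> subdiff \<phi> x \<Longrightarrow> \<phi> y = \<phi> x + g \<bullet> (y - x)"
    using polyhedral_convex_affine_along_par_orthogonal[OF assms] by blast
  have "subdiff \<phi> y = subdiff \<phi> x" if "dist y x < \<rho> / 2" "y - x \<in> ?N" for y
  proof -
    have "2 *\<^sub>R (y - x) \<in> ?N"
      using \<open>y - x \<in> ?N\<close> by (simp add: subspace_orthogonal_comp subspace_scale)
    moreover have "dist (x + 2 *\<^sub>R (y - x)) x < \<rho>"
      using that(1) by (simp add: dist_norm)
    ultimately have "\<phi> (x + 2 *\<^sub>R (y - x)) = \<phi> x + 2 * (g \<bullet> (y - x))" if "g \<in> subdiff \<phi> x" for g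
      using aff[of "x + 2 *\<^sub>R (y - x)" g] that by simp
    moreover have "\<phi> (x + (y - x)) = \<phi> x + g \<bullet> (y - x)" if "g \<in> subdiff \<phi> x" for g
      using aff[of y g] \<open>dist y x < \<rho> / 2\<close> \<open>\<rho> > 0\<close> \<open>y - x \<in> ?N\<close> that by simp
    ultimately show ?thesis
      using subdiff_eq_if_affine_on_ray[OF \<open>subdiff \<phi> x \<noteq> {}\<close>, of "y - x"] by simp
  qed
  moreover have "\<rho> / 2 > 0" "\<And>y. dist y x < \<rho> / 2 \<Longrightarrow> dist y x < \<rho>"
    using \<open>\<rho> > 0\<close> by auto
  ultimately show ?thesis
    using that aff by blast
qed

lemma C1_differentiable_on_line:
  fixes f :: "'a::euclidean_space \<Rightarrow> real"
  assumes "\<And>y. (f has_derivative (\<lambda>h. G y \<bullet> h)) (at y)" and "continuous_on UNIV G"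
  shows "(\<lambda>t. f (x + t *\<^sub>R d)) C1_differentiable_on S"
  unfolding C1_differentiable_on_def
proof (intro exI conjI ballI)
  show "((\<lambda>t. f (x + t *\<^sub>R d)) has_vector_derivative G (x + t *\<^sub>R d) \<bullet> d) (at t)" for t
    using has_real_derivative_along_line[OF assms(1)]
    by (simp add: has_real_derivative_iff_has_vector_derivative)
  show "continuous_on S (\<lambda>t. G (x + t *\<^sub>R d) \<bullet> d)"
  proof (rule continuous_on_inner)
    show "continuous_on S (\<lambda>t. G (x + t *\<^sub>R d))"
      by (rule continuous_on_compose2[OF assms(2)]) (auto intro!: continuous_intros)
  qed (rule continuous_on_const)
qed

lemma C1_differentiable_on_open_cong:
  assumes "f C1_differentiable_on S" and "open S" and "\<And>t. t \<in> S \<Longrightarrow> f t = g t"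
  shows "g C1_differentiable_on S"
  using assms has_vector_derivative_transform_within_open
  unfolding C1_differentiable_on_def by metis

lemma Gamma_geI:
  assumes "\<rho> > 0" and "\<And>d. norm d = 1 \<Longrightarrow> (\<lambda>t. \<psi> (x + t *\<^sub>R d)) C1_differentiable_on {0<..<\<rho>}"
  shows "ereal \<rho> \<le> Gamma \<psi> x"
  unfolding Gamma_def Gamma_max_def using assms
  by (auto intro!: Inf_greatest Sup_upper)

lemma polyhedral_convex_Gamma_pos:
  fixes f \<phi> :: "'a::euclidean_space \<Rightarrow> real"
  assumes df: "\<And>y. (f has_derivative (\<lambda>h. G y \<bullet> h)) (at y)" and "continuous_on UNIV G"
    and "polyhedral_convex \<phi>"
  obtains \<rho> where "\<rho> > 0" "ereal \<rho> \<le> Gamma (\<lambda>y. f y + \<phi> y) x"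
proof -
  obtain J \<rho> where J: "finite J" "J \<noteq> {}" "J \<subseteq> subdiff \<phi> x" and "\<rho> > 0"
    and \<phi>: "\<And>y. dist y x < \<rho> \<Longrightarrow> \<phi> y = \<phi> x + Max ((\<lambda>a. a \<bullet> (y - x)) ` J)"
    using polyhedral_convex_local_max[OF assms(3), where x = x] by blast
  have "(\<lambda>t. f (x + t *\<^sub>R d) + \<phi> (x + t *\<^sub>R d)) C1_differentiable_on {0<..<\<rho>}"
    if "norm d = 1" for d
  proof -
    define c where "c = Max ((\<lambda>a. a \<bullet> d) ` J)"
    have C1: "(\<lambda>t. f (x + t *\<^sub>R d) + (\<phi> x + t * c)) C1_differentiable_on {0<..<\<rho>}"
      by (rule C1_differentiable_on_add[OF C1_differentiable_on_line[OF df assms(2)]]) simp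
    have ray: "\<phi> x + t * c = \<phi> (x + t *\<^sub>R d)" if t: "t \<in> {0<..<\<rho>}" for t
    proof -
      have "Max ((\<lambda>a. a \<bullet> (t *\<^sub>R d)) ` J) = t * c"
        using t J unfolding c_def
        by (subst mono_Max_commute[where f = "(*) t"]) (auto simp: mono_def image_image)
      then show ?thesis
        using \<phi>[of "x + t *\<^sub>R d"] t \<open>norm d = 1\<close> by (simp add: dist_norm)
    qed
    show ?thesis
      by (rule C1_differentiable_on_open_cong[OF C1 open_greaterThanLessThan]) (simp add: ray)
  qed
  with \<open>\<rho> > 0\<close> that show ?thesis
    by (blast intro: Gamma_geI)
qed

section \<open>The proximal map, the normal map and the Riemannian Hessian\<close>

lemma prox_scaleR_eqI:
  fixes \<phi> :: "'a::euclidean_space \<Rightarrow> real"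
  assumes lam: "lam > 0" and sub: "lam *\<^sub>R (z - y) \<in> subdiff \<phi> y"
  shows "prox (\<lambda>v. lam *\<^sub>R v) \<phi> z = y"
proof -
  define Q where "Q w = \<phi> w + 1 / 2 * ((w - z) \<bullet> lam *\<^sub>R (w - z))" for w
  have Q_ge: "Q y + lam / 2 * ((w - y) \<bullet> (w - y)) \<le> Q w" for w
  proof -
    have "\<phi> y + (lam *\<^sub>R (z - y)) \<bullet> (w - y) \<le> \<phi> w"
      using sub unfolding subdiff_def by blast
    moreover have "(w - z) \<bullet> (w - z) = (w - y) \<bullet> (w - y) + 2 * ((w - y) \<bullet> (y - z)) + (y - z) \<bullet> (y - z)"
    proof -
      have "(w - z) \<bullet> (w - z) = ((w - y) + (y - z)) \<bullet> ((w - y) + (y - z))"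
        by simp
      then show ?thesis
        by (simp only: inner_add_left inner_add_right inner_commute[of "y - z" "w - y"])
    qed
    moreover have "(lam *\<^sub>R (z - y)) \<bullet> (w - y) = - lam * ((w - y) \<bullet> (y - z))"
      by (simp add: inner_diff_left inner_diff_right inner_commute algebra_simps)
    ultimately show ?thesis
      unfolding Q_def by (simp add: algebra_simps)
  qed
  have "Q y \<le> Q w" for w
  proof -
    have "0 \<le> lam / 2 * ((w - y) \<bullet> (w - y))"
      using lam by simp
    with Q_ge[of w] show ?thesis
      by linarith
  qed
  moreover have "y' = y" if "\<forall>w. Q y' \<le> Q w" for y'
  proof -
    have "lam / 2 * ((y' - y) \<bullet> (y' - y)) \<le> 0"
      using Q_ge[of y'] spec[OF that, of y] by linarith
    then show ?thesis
      using lam inner_ge_zero[of "y' - y"] by (simp add: mult_le_0_iff)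
  qed
  ultimately show ?thesis
    unfolding prox_def Q_def[symmetric] by (intro the_equality) auto
qed

lemma tau_scaleR:
  assumes "lam > 0"
  shows "tau (\<lambda>v. lam *\<^sub>R v) f \<phi> x = x + (1 / lam) *\<^sub>R closest_point (subdiff \<phi> x) (- grad f x)"
proof -
  have "inv (\<lambda>v::'a. lam *\<^sub>R v) = (\<lambda>v. (1 / lam) *\<^sub>R v)"
    by (rule inv_unique_comp) (use assms in \<open>auto simp: fun_eq_iff\<close>)
  then show ?thesis
    unfolding tau_def by simp
qed

lemma prox_scaleR_eventually_affine:
  fixes \<phi> :: "'a::euclidean_space \<Rightarrow> real" and C T :: "'a set"
  assumes lam: "lam > 0" and T: "subspace T" and TC: "orthogonal_comp T \<subseteq> par C"
    and "\<delta> > 0" and subd: "\<And>y. y - x \<in> T \<Longrightarrow> dist y x < \<delta> \<Longrightarrow> subdiff \<phi> y = C"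
    and p: "p \<in> rel_interior C"
  shows "\<forall>\<^sub>F z' in nhds (x + (1 / lam) *\<^sub>R p).
    prox (\<lambda>v. lam *\<^sub>R v) \<phi> z' = x + closest_point T (z' - (x + (1 / lam) *\<^sub>R p))"
proof -
  obtain e where "e > 0" and e: "ball p e \<inter> affine hull C \<subseteq> C" and "p \<in> C"
    using p unfolding mem_rel_interior_ball by blast
  define z where "z = x + (1 / lam) *\<^sub>R p"
  have "prox (\<lambda>v. lam *\<^sub>R v) \<phi> z' = x + closest_point T (z' - z)"
    if z': "dist z' z < min \<delta> (e / lam)" for z'
  proof -
    \<comment> \<open>\<open>lam (z' - y) = p + v\<close> with \<open>v \<in> par C\<close> small, so it stays in \<open>C = subdiff \<phi> y\<close>\<close>
    define u where "u = z' - z"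
    define y where "y = x + closest_point T u"
    have u: "norm u < \<delta>" "lam * norm u < e"
      using z' lam by (auto simp: u_def dist_norm field_simps)
    have "subdiff \<phi> y = C"
      using u norm_closest_point_subspace_le(1)[OF T, of u] closest_point_subspace_in[OF T, of u]
      by (intro subd) (auto simp: y_def dist_norm)
    define v where "v = lam *\<^sub>R (u - closest_point T u)"
    have "v \<in> par C"
      unfolding v_def using TC closest_point_subspace_residual[OF T, of u]
      by (auto simp: par_def intro: span_mul)
    moreover have "norm v < e"
      using u(2) lam norm_closest_point_subspace_le(2)[OF T, of u]
      by (simp add: v_def) (meson less_le_trans mult_left_mono less_imp_le not_le)
    ultimately have "p + v \<in> C"
      using e \<open>p \<in> C\<close> par_add_mem_affine_hull[of p C v] by (auto simp: dist_norm)
    moreover have "lam *\<^sub>R (z' - y) = p + v"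
      using lam by (simp add: y_def v_def u_def z_def algebra_simps)
    ultimately show ?thesis
      using lam \<open>subdiff \<phi> y = C\<close> by (simp add: prox_scaleR_eqI y_def u_def)
  qed
  moreover have "min \<delta> (e / lam) > 0"
    using \<open>\<delta> > 0\<close> \<open>e > 0\<close> lam by simp
  ultimately show ?thesis
    unfolding eventually_nhds_metric z_def by blast
qed

lemma prox_Fnor_has_derivative:
  fixes \<Lambda> P :: "'a::euclidean_space \<Rightarrow> 'a"
  assumes prox: "\<forall>\<^sub>F z' in nhds z. prox \<Lambda> \<phi> z' = x + P (z' - z)"
    and P: "linear P" and \<Lambda>: "linear \<Lambda>"
    and H: "(grad f has_derivative H) (at x)"
  shows "(prox \<Lambda> \<phi> has_derivative P) (at z)"
    and "(Fnor \<Lambda> f \<phi> has_derivative (\<lambda>h. H (P h) + \<Lambda> (h - P h))) (at z)"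
proof -
  obtain S where "open S" "z \<in> S" and S: "\<And>z'. z' \<in> S \<Longrightarrow> prox \<Lambda> \<phi> z' = x + P (z' - z)"
    using prox unfolding eventually_nhds by blast
  have "bounded_linear P" "bounded_linear \<Lambda>"
    using P \<Lambda> by (simp_all add: linear_conv_bounded_linear)
  then have aff: "((\<lambda>z'. x + P (z' - z)) has_derivative P) (at z)"
    by (auto intro!: derivative_eq_intros bounded_linear.has_derivative[of P])
  show "(prox \<Lambda> \<phi> has_derivative P) (at z)"
    by (rule has_derivative_transform_within_open[OF aff \<open>open S\<close> \<open>z \<in> S\<close>]) (simp add: S)
  have "(grad f has_derivative H) (at (x + P (z - z)))"
    using H linear_0[OF P] by simp
  from has_derivative_compose[OF aff this] has_derivative_diff[OF has_derivative_ident aff,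
      THEN bounded_linear.has_derivative[OF \<open>bounded_linear \<Lambda>\<close>]]
  have "((\<lambda>z'. grad f (x + P (z' - z)) + \<Lambda> (z' - (x + P (z' - z))))
      has_derivative (\<lambda>h. H (P h) + \<Lambda> (h - P h))) (at z)"
    by (rule has_derivative_add)
  then show "(Fnor \<Lambda> f \<phi> has_derivative (\<lambda>h. H (P h) + \<Lambda> (h - P h))) (at z)"
    by (rule has_derivative_transform_within_open[OF _ \<open>open S\<close> \<open>z \<in> S\<close>]) (simp add: Fnor_def S)
qed

lemma has_real_derivative_plus_locally_affine_along_line:
  fixes f \<phi> :: "'a::euclidean_space \<Rightarrow> real"
  assumes df: "\<And>u. (f has_derivative (\<lambda>h. grad f u \<bullet> h)) (at u)"
    and \<phi>: "\<And>u. u \<in> M \<Longrightarrow> dist u x < \<rho> \<Longrightarrow> \<phi> u = a \<bullet> u + b"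
    and line: "\<And>t. y + t *\<^sub>R \<eta> \<in> M" and "dist y x < \<rho>"
  shows "((\<lambda>t. f (y + t *\<^sub>R \<eta>) + \<phi> (y + t *\<^sub>R \<eta>)) has_real_derivative grad f y \<bullet> \<eta> + a \<bullet> \<eta>) (at 0)"
proof -
  have "\<forall>\<^sub>F t in nhds 0. f (y + t *\<^sub>R \<eta>) + (a \<bullet> (y + t *\<^sub>R \<eta>) + b) = f (y + t *\<^sub>R \<eta>) + \<phi> (y + t *\<^sub>R \<eta>)"
    using eventually_dist_along_line_less[OF \<open>dist y x < \<rho>\<close>, of \<eta>]
    by (rule eventually_mono) (simp add: \<phi> line)
  moreover have "((\<lambda>t. f (y + t *\<^sub>R \<eta>)) has_real_derivative grad f (y + 0 *\<^sub>R \<eta>) \<bullet> \<eta>) (at 0)"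
    by (rule has_real_derivative_along_line[OF df])
  moreover have "((\<lambda>t. a \<bullet> (y + t *\<^sub>R \<eta>) + b) has_real_derivative a \<bullet> \<eta>) (at 0)"
    by (rule has_real_derivative_along_line[where F' = "\<lambda>h. a \<bullet> h"]) (auto intro!: derivative_eq_intros)
  ultimately show ?thesis
    using DERIV_add DERIV_cong_ev by fastforce
qed

lemma is_riem_hessian_plus_locally_affine:
  fixes f \<phi> :: "'a::euclidean_space \<Rightarrow> real"
  assumes M: "affine M" "x \<in> M"
    and df: "\<And>y. (f has_derivative (\<lambda>h. grad f y \<bullet> h)) (at y)"
    and H: "(grad f has_derivative H) (at x)" and H_sym: "\<And>h k. H h \<bullet> k = H k \<bullet> h"
    and \<phi>: "\<And>y. y \<in> M \<Longrightarrow> dist y x < \<rho> \<Longrightarrow> \<phi> y = a \<bullet> y + b" and "\<rho> > 0"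
  shows "is_riem_hessian M (\<lambda>y. f y + \<phi> y) x (projM M \<circ> H \<circ> projM M)"
proof -
  define T where "T = dirsp M"
  define P where "P = projM M"
  have T: "subspace T" and MT: "\<And>y. y \<in> M \<longleftrightarrow> y - x \<in> T"
    using dirsp_affine[OF M] affine_diffs_subspace_subtract[OF M] by (auto simp: T_def)
  have P: "P = closest_point T"
    by (simp add: P_def T_def projM_def fun_eq_iff)
  have P_sa: "P u \<bullet> v = u \<bullet> P v" for u v
    unfolding P using closest_point_subspace_self_adjoint[OF T] .
  have P_idem: "P (P u) = P u" for u
    unfolding P using closest_point_subspace_idem[OF T] .
  have H_sa: "(P \<circ> H \<circ> P) u \<bullet> v = u \<bullet> (P \<circ> H \<circ> P) v" for u v
    using H_sym[of "P u" "P v"] by (simp add: P_sa inner_commute)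
  have "dist x x < \<rho>"
    using \<open>\<rho> > 0\<close> by simp
  have first: "\<forall>\<^sub>F s in nhds 0. ((\<lambda>t. f (x + s *\<^sub>R \<xi> + t *\<^sub>R \<eta>) + \<phi> (x + s *\<^sub>R \<xi> + t *\<^sub>R \<eta>))
      has_real_derivative grad f (x + s *\<^sub>R \<xi>) \<bullet> \<eta> + a \<bullet> \<eta>) (at 0)"
    if "\<xi> \<in> T" "\<eta> \<in> T" for \<xi> \<eta>
    using eventually_dist_along_line_less[OF \<open>dist x x < \<rho>\<close>, of \<xi>]
  proof (rule eventually_mono)
    fix s assume "dist (x + s *\<^sub>R \<xi>) x < \<rho>"
    moreover have "x + s *\<^sub>R \<xi> + t *\<^sub>R \<eta> \<in> M" for t
      using T that unfolding MT by (simp add: subspace_add subspace_scale)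
    ultimately show "((\<lambda>t. f (x + s *\<^sub>R \<xi> + t *\<^sub>R \<eta>) + \<phi> (x + s *\<^sub>R \<xi> + t *\<^sub>R \<eta>))
        has_real_derivative grad f (x + s *\<^sub>R \<xi>) \<bullet> \<eta> + a \<bullet> \<eta>) (at 0)"
      by (intro has_real_derivative_plus_locally_affine_along_line[OF df \<phi>])
  qed
  have second: "((\<lambda>s. grad f (x + s *\<^sub>R \<xi>) \<bullet> \<eta> + a \<bullet> \<eta>) has_real_derivative \<xi> \<bullet> (P \<circ> H \<circ> P) \<eta>) (at 0)"
    if "\<xi> \<in> T" "\<eta> \<in> T" for \<xi> \<eta>
  proof -
    have "((\<lambda>u. grad f u \<bullet> \<eta>) has_derivative (\<lambda>h. H h \<bullet> \<eta>)) (at (x + 0 *\<^sub>R \<xi>))"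
      using bounded_linear.has_derivative[OF bounded_linear_inner_left H] by simp
    from DERIV_add[OF has_real_derivative_along_line[OF this] DERIV_const]
    have "((\<lambda>s. grad f (x + s *\<^sub>R \<xi>) \<bullet> \<eta> + a \<bullet> \<eta>) has_real_derivative H \<xi> \<bullet> \<eta>) (at 0)"
      by simp
    moreover have "\<xi> \<bullet> (P \<circ> H \<circ> P) \<eta> = P \<xi> \<bullet> H (P \<eta>)"
      by (simp add: P_sa)
    moreover have "P \<xi> \<bullet> H (P \<eta>) = H \<xi> \<bullet> \<eta>"
      using that H_sym[of \<eta> \<xi>] by (simp add: P closest_point_self inner_commute)
    ultimately show ?thesis
      by simp
  qed
  show ?thesis
    unfolding is_riem_hessian_def P_def[symmetric] T_def[symmetric]
  proof (intro conjI allI ballI exI)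
    show "linear (P \<circ> H \<circ> P)"
      using T has_derivative_linear[OF H] by (auto simp: P intro: linear_compose linear_closest_point_subspace)
    show "P \<circ> H \<circ> P = P \<circ> (P \<circ> H \<circ> P) \<circ> P"
      by (simp add: fun_eq_iff P_idem)
  qed (use H_sa first second in auto)
qed

definition prox_normal_map_hessian_identity ::
    "real \<Rightarrow> ('a::euclidean_space \<Rightarrow> real) \<Rightarrow> ('a \<Rightarrow> real) \<Rightarrow> 'a set \<Rightarrow> 'a \<Rightarrow> bool" where
  "prox_normal_map_hessian_identity lam f \<phi> M x \<longleftrightarrow>
    (let \<Lambda> = (\<lambda>v. lam *\<^sub>R v); z = tau \<Lambda> f \<phi> x in
      \<exists>V DF. (prox \<Lambda> \<phi> has_derivative V) (at z) \<and> (Fnor \<Lambda> f \<phi> has_derivative DF) (at z) \<and>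
        is_riem_hessian M (\<lambda>y. f y + \<phi> y) x (V \<circ> DF))"

lemma prox_normal_map_hessian_identityI:
  fixes f \<phi> :: "'a::euclidean_space \<Rightarrow> real" and C :: "'a set"
  assumes lam: "lam > 0" and M: "affine M" "x \<in> M"
    and df: "\<And>y. (f has_derivative (\<lambda>h. grad f y \<bullet> h)) (at y)"
    and H: "(grad f has_derivative H) (at x)" and H_sym: "\<And>h k. H h \<bullet> k = H k \<bullet> h"
    and par_C: "orthogonal_comp (dirsp M) = par C"
    and "\<delta> > 0" and near: "\<And>y. y \<in> M \<Longrightarrow> dist y x < \<delta> \<Longrightarrow> subdiff \<phi> y = C \<and> \<phi> y = a \<bullet> y + b"
    and p_ri: "closest_point C (- grad f x) \<in> rel_interior C"
  shows "prox_normal_map_hessian_identity lam f \<phi> M x"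
proof -
  define T where "T = dirsp M"
  define P where "P = closest_point T"
  define p where "p = closest_point C (- grad f x)"
  have T: "subspace T" and MT: "\<And>y. y \<in> M \<longleftrightarrow> y - x \<in> T"
    using dirsp_affine[OF M] affine_diffs_subspace_subtract[OF M] by (auto simp: T_def)
  have P: "linear P" "\<And>u. P (P u) = P u"
    unfolding P_def using T by (auto intro: linear_closest_point_subspace closest_point_subspace_idem)
  have tau: "tau (\<lambda>v. lam *\<^sub>R v) f \<phi> x = x + (1 / lam) *\<^sub>R p"
    using near[OF M(2)] \<open>\<delta> > 0\<close> by (simp add: tau_scaleR[OF lam] p_def)
  have "\<forall>\<^sub>F z' in nhds (x + (1 / lam) *\<^sub>R p).
      prox (\<lambda>v. lam *\<^sub>R v) \<phi> z' = x + P (z' - (x + (1 / lam) *\<^sub>R p))"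
    unfolding P_def p_def using par_C near p_ri
    by (intro prox_scaleR_eventually_affine[OF lam T _ \<open>\<delta> > 0\<close>]) (auto simp: T_def MT)
  from prox_Fnor_has_derivative[OF this P(1) _ H]
  have "(prox (\<lambda>v. lam *\<^sub>R v) \<phi> has_derivative P) (at (x + (1 / lam) *\<^sub>R p))"
    and "(Fnor (\<lambda>v. lam *\<^sub>R v) f \<phi> has_derivative (\<lambda>h. H (P h) + lam *\<^sub>R (h - P h)))
      (at (x + (1 / lam) *\<^sub>R p))"
    by (simp_all add: linearI scaleR_add_right)
  moreover have "P \<circ> (\<lambda>h. H (P h) + lam *\<^sub>R (h - P h)) = P \<circ> H \<circ> P"
    using P by (simp add: fun_eq_iff linear_add linear_scale linear_diff)
  moreover have "is_riem_hessian M (\<lambda>y. f y + \<phi> y) x (P \<circ> H \<circ> P)"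
  proof -
    have "projM M = P"
      by (simp add: fun_eq_iff projM_def P_def T_def)
    with near \<open>\<delta> > 0\<close> show ?thesis
      using is_riem_hessian_plus_locally_affine[OF M df H H_sym, where \<phi> = \<phi> and \<rho> = \<delta>]
      by simp
  qed
  ultimately show ?thesis
    unfolding prox_normal_map_hessian_identity_def Let_def tau by metis
qed

lemma prox_normal_map_hessian_identity_near:
  fixes f \<phi> :: "'a::euclidean_space \<Rightarrow> real"
  assumes df: "\<And>y. (f has_derivative (\<lambda>h. grad f y \<bullet> h)) (at y)"
    and H: "\<And>y. (grad f has_derivative H y) (at y)" and H_sym: "\<And>y h k. H y h \<bullet> k = H y k \<bullet> h"
    and cont: "continuous_on UNIV (grad f)"
    and poly: "polyhedral_convex \<phi>" and ps: "partly_smooth_affine \<phi> xs M"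
    and ri: "- grad f xs \<in> rel_interior (subdiff \<phi> xs)" and lam: "lam > 0"
  obtains r where "r > 0"
    "\<And>x. x \<in> ball xs r \<inter> M \<Longrightarrow> prox_normal_map_hessian_identity lam f \<phi> M x"
proof -
  define C where "C = subdiff \<phi> xs"
  define q where "q = - grad f xs"
  have M: "affine M" "xs \<in> M" and T: "dirsp M = orthogonal_comp (par C)"
    using ps unfolding partly_smooth_affine_def C_def by auto
  have par_C: "orthogonal_comp (dirsp M) = par C"
    unfolding T par_def by (simp add: orthogonal_comp_self subspace_span)
  obtain \<rho> where "\<rho> > 0" and loc: "\<And>y. dist y xs < \<rho> \<Longrightarrow> y - xs \<in> orthogonal_comp (par C) \<Longrightarrow>
      subdiff \<phi> y = C \<and> (\<forall>g\<in>C. \<phi> y = \<phi> xs + g \<bullet> (y - xs))"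
    using polyhedral_convex_subdiff_locally_constant[OF poly, where x = xs] unfolding C_def by blast
  obtain e where "e > 0" and e: "\<And>u. dist u q < e \<Longrightarrow> closest_point C u \<in> rel_interior C"
    using closest_point_in_rel_interior_near[OF closed_subdiff ri] unfolding C_def q_def by blast
  have "isCont (\<lambda>y. - grad f y) xs"
    using cont by (simp add: continuous_on_eq_continuous_at continuous_minus)
  then obtain r where "r > 0" and r: "\<And>y. dist y xs < r \<Longrightarrow> dist (- grad f y) q < e"
    using \<open>e > 0\<close> unfolding continuous_at_eps_delta q_def by blast
  show ?thesis
  proof (rule that[of "min r (\<rho> / 2)"])
    show "min r (\<rho> / 2) > 0"
      using \<open>r > 0\<close> \<open>\<rho> > 0\<close> by simp
    fix x assume x: "x \<in> ball xs (min r (\<rho> / 2)) \<inter> M"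
    have "q \<in> C"
      using ri rel_interior_subset unfolding C_def q_def by blast
    have near: "subdiff \<phi> y = C \<and> \<phi> y = q \<bullet> y + (\<phi> xs - q \<bullet> xs)"
      if "y \<in> M" "dist y x < \<rho> / 2" for y
    proof -
      have "dist y xs < \<rho>"
        using x that(2) dist_triangle_half_l[of y x \<rho> xs] by (auto simp: dist_commute)
      moreover have "y - xs \<in> orthogonal_comp (par C)"
        using dirsp_affine[OF M] that(1) T by auto
      ultimately show ?thesis
        using loc \<open>q \<in> C\<close> by (simp add: inner_diff_right)
    qed
    have "x \<in> M" "dist (- grad f x) q < e"
      using x r by (auto simp: dist_commute)
    with \<open>\<rho> > 0\<close> show "prox_normal_map_hessian_identity lam f \<phi> M x"
      by (intro prox_normal_map_hessian_identityI[where \<delta> = "\<rho> / 2", OF lam M(1) _ df H H_sym par_C _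
            near e]) auto
  qed
qed

theorem lemma5p4:
  fixes f \<phi> :: "'a::euclidean_space \<Rightarrow> real"
    and S :: "nat \<Rightarrow> 'a set" and m i :: nat and xs :: 'a
    and M :: "'a set" and lam :: real
  assumes f_C2: "C2_on UNIV f"
    and phi_poly: "polyhedral_convex \<phi>"
    and trunc: "truncatable (\<lambda>x. f x + \<phi> x) S m"
    and stat: "stationary f \<phi> xs"
    and i_le: "i \<le> m" and xs_in: "xs \<in> S i" and xs_notin: "i < m \<longrightarrow> xs \<notin> S (Suc i)"
    and C1_ps: "partly_smooth_affine \<phi> xs M"
    and C1_loc: "\<forall>r>0. ereal r < Gamma (\<lambda>x. f x + \<phi> x) xs \<longrightarrow>
                   ball xs r \<inter> S i = ball xs r \<inter> M"
    and C3: "- grad f xs \<in> rel_interior (subdiff \<phi> xs)"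
    and lam_pos: "lam > 0"
  shows "\<exists>r0>0. ereal r0 < Gamma (\<lambda>x. f x + \<phi> x) xs \<and>
           (\<forall>x\<in>ball xs r0 \<inter> M.
              let \<Lambda> = (\<lambda>v. lam *\<^sub>R v); z = tau \<Lambda> f \<phi> x in
              \<exists>V DF. (prox \<Lambda> \<phi> has_derivative V) (at z) \<and>
                     (Fnor \<Lambda> f \<phi> has_derivative DF) (at z) \<and>
                     is_riem_hessian M (\<lambda>y. f y + \<phi> y) x (V \<circ> DF))"
proof -
  obtain H where df: "\<And>y. (f has_derivative (\<lambda>h. grad f y \<bullet> h)) (at y)"
    and H: "\<And>y. (grad f has_derivative H y) (at y)" and H_sym: "\<And>y h k. H y h \<bullet> k = H y k \<bullet> h"
    and cont: "continuous_on UNIV (grad f)"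
    using C2_on_UNIV_gradient_hessian[OF f_C2] by blast
  obtain \<rho> where "\<rho> > 0" and Gamma: "ereal \<rho> \<le> Gamma (\<lambda>x. f x + \<phi> x) xs"
    using polyhedral_convex_Gamma_pos[OF df cont phi_poly] by blast
  obtain r where "r > 0"
    and near: "\<And>x. x \<in> ball xs r \<inter> M \<Longrightarrow> prox_normal_map_hessian_identity lam f \<phi> M x"
    using prox_normal_map_hessian_identity_near[OF df H H_sym cont phi_poly C1_ps C3 lam_pos] by blast
  have "min r (\<rho> / 2) < \<rho>"
    using \<open>\<rho> > 0\<close> by linarith
  then have "ereal (min r (\<rho> / 2)) < ereal \<rho>"
    by (simp only: less_ereal.simps(1))
  then have "ereal (min r (\<rho> / 2)) < Gamma (\<lambda>x. f x + \<phi> x) xs"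
    using Gamma by (rule less_le_trans)
  with \<open>r > 0\<close> \<open>\<rho> > 0\<close> near show ?thesis
    unfolding prox_normal_map_hessian_identity_def by (intro exI[of _ "min r (\<rho> / 2)"]) auto
qed

end
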